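(* Let $n,k$ be positive integers and let $\mathscr{K}_{n,k}$ be the family of all graphs with at most $n$ vertices that are disjoint unions of cliques, each clique having at most $k$ vertices. Then \[ \mathscr{U}(\mathscr{K}_{n,k}) ~=~ \sum_{i=1}^k \left\lfloor \frac{n}{i} \right\rfloor ~\ge~ (n+1)\ln(k+1) - k . \]
   Context: All graphs are finite and simple. A graph $U$ is an induced-universal graph for a family $\mathscr{F}$ of graphs if every graph of $\mathscr{F}$ is isomorphic to an induced subgraph of $U$. $\mathscr{U}(\mathscr{F})$ denotes the smallest number of vertices of an induced-universal graph for $\mathscr{F}$. *)

theory Defs
  imports Complex_Main
begin

type_synonym 'a graph = "'a set \<times> ('a \<times> 'a) set"

definition verts :: "'a graph \<Rightarrow> 'a set" where "verts G = fst G"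
definition edges :: "'a graph \<Rightarrow> ('a \<times> 'a) set" where "edges G = snd G"

definition simple_graph :: "'a graph \<Rightarrow> bool" where
  "simple_graph G \<longleftrightarrow> finite (verts G) \<and> edges G \<subseteq> verts G \<times> verts G
     \<and> sym (edges G) \<and> (\<forall>x. (x, x) \<notin> edges G)"

definition induced_embedding :: "('a \<Rightarrow> 'b) \<Rightarrow> 'a graph \<Rightarrow> 'b graph \<Rightarrow> bool" where
  "induced_embedding f G U \<longleftrightarrow> inj_on f (verts G) \<and> f ` verts G \<subseteq> verts U
     \<and> (\<forall>x\<in>verts G. \<forall>y\<in>verts G. (x, y) \<in> edges G \<longleftrightarrow> (f x, f y) \<in> edges U)"

definition induced_universal :: "'b graph \<Rightarrow> 'a graph set \<Rightarrow> bool" where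
  "induced_universal U F \<longleftrightarrow> simple_graph U \<and> (\<forall>G\<in>F. \<exists>f. induced_embedding f G U)"

text \<open>Smallest number of vertices of an induced-universal graph for F
  (vertex type nat suffices, since every finite graph is isomorphic to one on nat).\<close>
definition univ_number :: "'a graph set \<Rightarrow> nat" where
  "univ_number F = (LEAST m. \<exists>U :: nat graph. induced_universal U F \<and> card (verts U) = m)"

text \<open>The closed neighbourhood of x, i.e. its clique in a disjoint union of cliques.\<close>
definition closed_nbhd :: "'a graph \<Rightarrow> 'a \<Rightarrow> 'a set" where
  "closed_nbhd G x = {y \<in> verts G. y = x \<or> (x, y) \<in> edges G}"

definition union_of_cliques :: "'a graph \<Rightarrow> bool" where
  "union_of_cliques G \<longleftrightarrow> (\<forall>x y z. (x, y) \<in> edges G \<longrightarrow> (y, z) \<in> edges G \<longrightarrow> x \<noteq> z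
       \<longrightarrow> (x, z) \<in> edges G)"

text \<open>The family K_{n,k} (graphs up to isomorphism, represented on vertex type nat).\<close>
definition K_family :: "nat \<Rightarrow> nat \<Rightarrow> nat graph set" where
  "K_family n k = {G. simple_graph G \<and> card (verts G) \<le> n \<and> union_of_cliques G
       \<and> (\<forall>x\<in>verts G. card (closed_nbhd G x) \<le> k)}"

end

theory Submission
  imports Defs "HOL-Library.Countable" "HOL-Analysis.Harmonic_Numbers"
begin

(* Upper bound: in the graph whose column j is a clique on the rows i \<le> k with i * j \<le> n
   (there are \<Sum>i = 1..k. n div i such cells), a graph of K_{n,k} embeds by listing its cliques
   by decreasing size: the j-th one has some size s with j * s \<le> n, so it fits into column j.
   Lower bound: a universal graph contains, for every i \<le> k, a copy of n div i disjoint
   i-cliques. A clique of the universal graph meets at most one copied clique of each size, so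
   greedily removing a largest copied clique together with everything it meets loses at most as
   many copied cliques as it has vertices; hence the copied cliques cover at least
   \<Sum>i = 1..k. n div i vertices. The logarithmic bound follows from
   n div i \<ge> (n + 1) / i - 1 and harm k \<ge> ln (k + 1). *)

lemma sum_div_ge_ln:
  fixes n k :: nat
  shows "real (\<Sum>i = 1..k. n div i) \<ge> (real n + 1) * ln (real k + 1) - real k"
proof -
  have div_ge: "(real n + 1) / real i \<le> real (n div i) + 1" if "i \<ge> 1" for i
  proof -
    have "n = i * (n div i) + n mod i" "n mod i < i" using that by simp_all
    then have "n + 1 \<le> i * (n div i) + i" by linarith
    then have "real n + 1 \<le> real i * (real (n div i) + 1)"
      by (simp add: algebra_simps flip: of_nat_mult of_nat_add of_nat_Suc)
    then show ?thesis using that by (simp add: divide_le_eq mult.commute)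
  qed
  have "(real n + 1) * ln (real k + 1) \<le> (real n + 1) * harm k"
    by (intro mult_left_mono ln_le_harm) auto
  also have "\<dots> = (\<Sum>i = 1..k. (real n + 1) / real i)"
    by (simp add: harm_def sum_distrib_left divide_inverse)
  also have "\<dots> \<le> (\<Sum>i = 1..k. real (n div i) + 1)"
    by (intro sum_mono div_ge) simp
  also have "\<dots> = real (\<Sum>i = 1..k. n div i) + real k"
    by (simp add: sum.distrib)
  finally show ?thesis by simp
qed

definition map_graph :: "('a \<Rightarrow> 'b) \<Rightarrow> 'a graph \<Rightarrow> 'b graph" where
  "map_graph g G = (g ` verts G, map_prod g g ` edges G)"

lemma card_verts_map_graph:
  "inj_on g (verts U) \<Longrightarrow> card (verts (map_graph g U)) = card (verts U)"
  by (simp add: map_graph_def verts_def card_image)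

lemma induced_universal_map_graph:
  assumes g: "inj_on g (verts U)" and U: "induced_universal U F"
  shows "induced_universal (map_graph g U) F"
proof -
  have U_simple: "simple_graph U" using U by (simp add: induced_universal_def)
  have edge_iff: "(g x, g y) \<in> edges (map_graph g U) \<longleftrightarrow> (x, y) \<in> edges U"
    if "x \<in> verts U" "y \<in> verts U" for x y
  proof
    assume "(g x, g y) \<in> edges (map_graph g U)"
    then obtain a b where "(a, b) \<in> edges U" "g a = g x" "g b = g y"
      by (auto simp: map_graph_def edges_def)
    moreover have "a \<in> verts U" "b \<in> verts U"
      using \<open>(a, b) \<in> edges U\<close> U_simple by (auto simp: simple_graph_def)
    ultimately show "(x, y) \<in> edges U"
      using g that by (metis inj_onD)
  qed (auto simp: map_graph_def edges_def)
  have "simple_graph (map_graph g U)"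
    unfolding simple_graph_def
  proof (intro conjI allI)
    have E: "edges U \<subseteq> verts U \<times> verts U" "sym (edges U)"
      using U_simple by (simp_all add: simple_graph_def)
    show "finite (verts (map_graph g U))"
      using U_simple by (simp add: simple_graph_def map_graph_def verts_def)
    show "edges (map_graph g U) \<subseteq> verts (map_graph g U) \<times> verts (map_graph g U)"
      using E(1) by (auto simp: map_graph_def verts_def edges_def)
    show "sym (edges (map_graph g U))"
      using E(2) by (auto simp: map_graph_def edges_def sym_def)
    fix z
    show "(z, z) \<notin> edges (map_graph g U)"
    proof
      assume "(z, z) \<in> edges (map_graph g U)"
      then obtain x y where "(x, y) \<in> edges U" "g x = z" "g y = z"
        by (auto simp: map_graph_def edges_def)
      moreover from this(1) have "x \<in> verts U" "y \<in> verts U" using E(1) by auto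
      ultimately show False
        using g U_simple by (metis inj_onD simple_graph_def)
    qed
  qed
  moreover have "induced_embedding (g \<circ> f) G (map_graph g U)"
    if f: "induced_embedding f G U" for f and G :: "'c graph"
    unfolding induced_embedding_def
  proof (intro conjI ballI)
    have fG: "f ` verts G \<subseteq> verts U" "inj_on f (verts G)"
      using f by (simp_all add: induced_embedding_def)
    show "inj_on (g \<circ> f) (verts G)"
      using fG g by (blast intro: comp_inj_on inj_on_subset)
    show "(g \<circ> f) ` verts G \<subseteq> verts (map_graph g U)"
      using fG by (auto simp: map_graph_def verts_def)
    fix x y assume "x \<in> verts G" "y \<in> verts G"
    then show "(x, y) \<in> edges G \<longleftrightarrow> ((g \<circ> f) x, (g \<circ> f) y) \<in> edges (map_graph g U)"
      using f fG(1) edge_iff[of "f x" "f y"] by (auto simp: induced_embedding_def)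
  qed
  ultimately show ?thesis
    using U unfolding induced_universal_def by blast
qed

lemma univ_number_eqI:
  fixes U :: "'b::countable graph"
  assumes "induced_universal U F" "card (verts U) = m"
    and "\<And>V :: nat graph. induced_universal V F \<Longrightarrow> m \<le> card (verts V)"
  shows "univ_number F = m"
  unfolding univ_number_def
proof (rule Least_equality)
  have "inj_on to_nat (verts U)" by (simp add: inj_on_def)
  then show "\<exists>V :: nat graph. induced_universal V F \<and> card (verts V) = m"
    using assms(1,2) card_verts_map_graph induced_universal_map_graph by blast
qed (use assms(3) in blast)

lemma card_le_card_UN_if_inj_on_card_meeting:
  assumes "finite P"
    and "\<And>p. p \<in> P \<Longrightarrow> finite (S p) \<and> S p \<noteq> {}"
    and "\<And>p. p \<in> P \<Longrightarrow> inj_on (card \<circ> S) {q \<in> P. S p \<inter> S q \<noteq> {}}"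
  shows "card P \<le> card (\<Union> (S ` P))"
  using assms
proof (induction P rule: finite_psubset_induct)
  case (psubset P)
  show ?case
  proof (cases "P = {}")
    case False
    have "Max (card ` S ` P) \<in> card ` S ` P"
      using psubset.hyps False by (intro Max_in) auto
    then obtain p where p: "p \<in> P" "card (S p) = Max (card ` S ` P)"
      by auto
    \<comment> \<open>The sets meeting a largest set S p have distinct sizes, all at most card (S p).\<close>
    define N where "N = {q \<in> P. S p \<inter> S q \<noteq> {}}"
    have "(card \<circ> S) ` N \<subseteq> {1..card (S p)}"
    proof
      fix c assume "c \<in> (card \<circ> S) ` N"
      then obtain q where q: "q \<in> P" "S q \<noteq> {}" "c = card (S q)"
        by (auto simp: N_def)
      then have "card (S q) \<le> card (S p)"
        using psubset.hyps p(2) by simp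
      with q psubset.prems(1) show "c \<in> {1..card (S p)}"
        by (auto simp: Suc_le_eq card_gt_0_iff)
    qed
    moreover have "inj_on (card \<circ> S) N"
      using psubset.prems(2)[OF p(1)] unfolding N_def .
    ultimately have card_N: "card N \<le> card (S p)"
      by (metis card_atLeastAtMost card_image card_mono diff_Suc_1 finite_atLeastAtMost)
    have "p \<in> N" "N \<subseteq> P"
      using p(1) psubset.prems(1) by (auto simp: N_def)
    then have IH: "card (P - N) \<le> card (\<Union> (S ` (P - N)))"
    proof (intro psubset.IH)
      fix q assume "q \<in> P - N"
      then have "inj_on (card \<circ> S) {q' \<in> P. S q \<inter> S q' \<noteq> {}}"
        using psubset.prems(2) by blast
      then show "inj_on (card \<circ> S) {q' \<in> P - N. S q \<inter> S q' \<noteq> {}}"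
        by (rule inj_on_subset) auto
    qed (use psubset.prems(1) in auto)
    have "card P = card N + card (P - N)"
      using \<open>N \<subseteq> P\<close> psubset.hyps
      by (metis card_Diff_subset card_mono finite_subset le_add_diff_inverse)
    also have "\<dots> \<le> card (S p) + card (\<Union> (S ` (P - N)))"
      using card_N IH by (rule add_mono)
    also have "\<dots> = card (S p \<union> \<Union> (S ` (P - N)))"
      using p(1) psubset.hyps psubset.prems(1) by (intro card_Un_disjoint[symmetric]) (auto simp: N_def)
    also have "\<dots> \<le> card (\<Union> (S ` P))"
      using p(1) psubset.hyps psubset.prems(1) by (intro card_mono) auto
    finally show ?thesis .
  qed simp
qed

lemma ex_rank_weight_bound:
  fixes w :: "'a \<Rightarrow> nat"
  assumes "finite A"
  shows "\<exists>\<rho>. inj_on \<rho> A \<and> \<rho> ` A \<subseteq> {..<card A} \<and> (\<forall>a\<in>A. (\<rho> a + 1) * w a \<le> sum w A)"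
  using assms
proof (induction A rule: finite_remove_induct)
  case (remove A)
  \<comment> \<open>An element of least weight gets the last rank.\<close>
  have "Min (w ` A) \<in> w ` A"
    using remove.hyps(1,2) by (intro Min_in) auto
  then obtain a where "a \<in> A" "w a = Min (w ` A)"
    by auto
  then have a: "a \<in> A" "\<forall>b\<in>A. w a \<le> w b"
    using remove.hyps(1) by simp_all
  obtain \<rho> where \<rho>: "inj_on \<rho> (A - {a})" "\<rho> ` (A - {a}) \<subseteq> {..<card (A - {a})}"
      "\<forall>b\<in>A - {a}. (\<rho> b + 1) * w b \<le> sum w (A - {a})"
    using remove.IH[OF a(1)] by blast
  have "card A > 0"
    using a(1) remove.hyps(1) card_gt_0_iff by blast
  define \<rho>' where "\<rho>' = \<rho>(a := card (A - {a}))"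
  have "inj_on \<rho>' (insert a (A - {a}))"
    using \<rho>(1,2) by (fastforce simp: \<rho>'_def inj_on_def image_subset_iff)
  then have "inj_on \<rho>' A"
    using a(1) by (simp add: insert_absorb)
  moreover have "\<rho>' ` A \<subseteq> {..<card A}"
    using \<rho>(2) a(1) remove.hyps(1) \<open>card A > 0\<close> by (auto simp: \<rho>'_def)
  moreover have "(\<rho>' b + 1) * w b \<le> sum w A" if "b \<in> A" for b
  proof (cases "b = a")
    case True
    have "card A * w a \<le> sum w A"
      using sum_bounded_below[of A "w a" w] a(2) by simp
    then show ?thesis
      using True a(1) remove.hyps(1) \<open>card A > 0\<close> by (simp add: \<rho>'_def)
  next
    case False
    then have "(\<rho> b + 1) * w b \<le> sum w (A - {a})"
      using \<rho>(3) that by blast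
    also have "\<dots> \<le> sum w A"
      using remove.hyps(1) by (intro sum_mono2) auto
    finally show ?thesis
      using False by (simp add: \<rho>'_def)
  qed
  ultimately show ?case by blast
qed simp

lemma inj_on_card_less:
  fixes A :: "'a::linorder set"
  assumes "finite A"
  shows "inj_on (\<lambda>x. card {y \<in> A. y < x}) A"
proof (rule linorder_inj_onI)
  fix x y assume "x < y" "x \<in> A"
  then have "{z \<in> A. z < x} \<subset> {z \<in> A. z < y}" by auto
  then have "card {z \<in> A. z < x} < card {z \<in> A. z < y}"
    using assms by (intro psubset_card_mono) auto
  then show "card {z \<in> A. z < x} \<noteq> card {z \<in> A. z < y}"
    by simp
qed auto

lemma closed_nbhd_subset_verts: "closed_nbhd G x \<subseteq> verts G"
  by (auto simp: closed_nbhd_def)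

lemma finite_closed_nbhd: "simple_graph G \<Longrightarrow> finite (closed_nbhd G x)"
  unfolding simple_graph_def by (meson closed_nbhd_subset_verts finite_subset)

lemma self_in_closed_nbhd: "x \<in> verts G \<Longrightarrow> x \<in> closed_nbhd G x"
  by (simp add: closed_nbhd_def)

lemma closed_nbhd_eq_if_mem:
  assumes "simple_graph G" "union_of_cliques G" "y \<in> closed_nbhd G x"
  shows "closed_nbhd G y = closed_nbhd G x"
proof -
  have E: "sym (edges G)" "\<And>x y z. (x, y) \<in> edges G \<Longrightarrow> (y, z) \<in> edges G \<Longrightarrow> x \<noteq> z \<Longrightarrow> (x, z) \<in> edges G"
    using assms(1,2) by (auto simp: simple_graph_def union_of_cliques_def)
  show ?thesis
  proof (cases "y = x")
    case False
    then have "(x, y) \<in> edges G" "(y, x) \<in> edges G"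
      using assms(3) E(1) by (auto simp: closed_nbhd_def sym_def)
    then show ?thesis
      using E(2) assms(3) unfolding closed_nbhd_def by blast
  qed simp
qed

lemma edge_iff_closed_nbhd_eq:
  assumes "simple_graph G" "union_of_cliques G" "x \<in> verts G" "y \<in> verts G"
  shows "(x, y) \<in> edges G \<longleftrightarrow> x \<noteq> y \<and> closed_nbhd G x = closed_nbhd G y"
proof
  assume "(x, y) \<in> edges G"
  then have "x \<noteq> y" "y \<in> closed_nbhd G x"
    using assms(1,4) by (auto simp: simple_graph_def closed_nbhd_def)
  then show "x \<noteq> y \<and> closed_nbhd G x = closed_nbhd G y"
    using closed_nbhd_eq_if_mem[OF assms(1,2)] by metis
next
  assume "x \<noteq> y \<and> closed_nbhd G x = closed_nbhd G y"
  then show "(x, y) \<in> edges G"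
    using self_in_closed_nbhd[OF assms(4)] by (auto simp: closed_nbhd_def)
qed

lemma sum_card_closed_nbhds:
  assumes "simple_graph G" "union_of_cliques G"
  shows "(\<Sum>C \<in> closed_nbhd G ` verts G. card C) = card (verts G)"
proof -
  have "pairwise disjnt (closed_nbhd G ` verts G)"
  proof (rule pairwiseI)
    fix C D assume "C \<in> closed_nbhd G ` verts G" "D \<in> closed_nbhd G ` verts G" "C \<noteq> D"
    then show "disjnt C D"
      using closed_nbhd_eq_if_mem[OF assms] unfolding disjnt_def by blast
  qed
  then have "card (\<Union> (closed_nbhd G ` verts G)) = (\<Sum>C \<in> closed_nbhd G ` verts G. card C)"
    using finite_closed_nbhd[OF assms(1)] by (intro card_Union_disjoint) auto
  moreover have "\<Union> (closed_nbhd G ` verts G) = verts G"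
  proof
    show "\<Union> (closed_nbhd G ` verts G) \<subseteq> verts G"
      by (intro UN_least closed_nbhd_subset_verts)
    show "verts G \<subseteq> \<Union> (closed_nbhd G ` verts G)"
      using self_in_closed_nbhd by fast
  qed
  ultimately show ?thesis
    by simp
qed

definition clique_grid :: "nat \<Rightarrow> nat \<Rightarrow> (nat \<times> nat) graph" where
  "clique_grid n k = (let V = Sigma {1..k} (\<lambda>i. {1..n div i})
     in (V, {(u, v) \<in> V \<times> V. u \<noteq> v \<and> snd u = snd v}))"

lemma verts_clique_grid: "verts (clique_grid n k) = Sigma {1..k} (\<lambda>i. {1..n div i})"
  by (simp add: clique_grid_def verts_def Let_def)

lemma edges_clique_grid:
  "edges (clique_grid n k) = {(u, v) \<in> verts (clique_grid n k) \<times> verts (clique_grid n k). u \<noteq> v \<and> snd u = snd v}"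
  by (simp add: clique_grid_def verts_def edges_def Let_def)

lemma card_verts_clique_grid: "card (verts (clique_grid n k)) = (\<Sum>i = 1..k. n div i)"
  by (simp add: verts_clique_grid)

lemma simple_graph_clique_grid: "simple_graph (clique_grid n k)"
  unfolding simple_graph_def edges_clique_grid by (auto simp: verts_clique_grid sym_def)

lemma clique_grid_embedding:
  assumes G: "G \<in> K_family n k"
  shows "\<exists>f. induced_embedding f G (clique_grid n k)"
proof -
  let ?N = "closed_nbhd G"
  have G_simple: "simple_graph G" and "union_of_cliques G" and "card (verts G) \<le> n"
    and N_le_k: "\<And>x. x \<in> verts G \<Longrightarrow> card (?N x) \<le> k"
    using G by (auto simp: K_family_def)
  have "finite (?N ` verts G)"
    using G_simple by (simp add: simple_graph_def)
  then obtain \<rho> where \<rho>_inj: "inj_on \<rho> (?N ` verts G)"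
    and "\<forall>C \<in> ?N ` verts G. (\<rho> C + 1) * card C \<le> (\<Sum>C \<in> ?N ` verts G. card C)"
    using ex_rank_weight_bound by blast
  then have \<rho>_bound: "(\<rho> (?N x) + 1) * card (?N x) \<le> card (verts G)" if "x \<in> verts G" for x
    using that sum_card_closed_nbhds[OF G_simple \<open>union_of_cliques G\<close>] by simp
  \<comment> \<open>x goes to the column given by the rank of its clique, in the row given by its
    position inside the clique.\<close>
  define r where "r x = card {y \<in> ?N x. y < x}" for x
  define f where "f x = (r x + 1, \<rho> (?N x) + 1)" for x
  have r_less: "r x < card (?N x)" if "x \<in> verts G" for x
    unfolding r_def using self_in_closed_nbhd[OF that] finite_closed_nbhd[OF G_simple]
    by (intro psubset_card_mono) auto
  have eq_iff: "f x = f y \<longleftrightarrow> x = y" and adj_iff: "snd (f x) = snd (f y) \<longleftrightarrow> ?N x = ?N y"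
    if "x \<in> verts G" "y \<in> verts G" for x y
  proof -
    show "snd (f x) = snd (f y) \<longleftrightarrow> ?N x = ?N y"
      using \<rho>_inj that by (auto simp: f_def inj_on_def)
    have "x = y" if "?N x = ?N y" "r x = r y"
      using inj_on_card_less[OF finite_closed_nbhd[OF G_simple, of x]] that
        self_in_closed_nbhd[OF \<open>x \<in> verts G\<close>] self_in_closed_nbhd[OF \<open>y \<in> verts G\<close>]
      by (auto simp: r_def inj_on_def)
    then show "f x = f y \<longleftrightarrow> x = y"
      using \<rho>_inj that by (auto simp: f_def inj_on_def)
  qed
  have f_verts: "f x \<in> verts (clique_grid n k)" if "x \<in> verts G" for x
  proof -
    have "(r x + 1) * (\<rho> (?N x) + 1) \<le> card (?N x) * (\<rho> (?N x) + 1)"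
      using r_less[OF that] by (intro mult_right_mono) auto
    also have "\<dots> \<le> n"
      using \<rho>_bound[OF that] \<open>card (verts G) \<le> n\<close> by (simp add: mult.commute)
    finally show ?thesis
      using r_less[OF that] N_le_k[OF that]
      by (simp add: verts_clique_grid f_def less_eq_div_iff_mult_less_eq algebra_simps)
  qed
  have "induced_embedding f G (clique_grid n k)"
    unfolding induced_embedding_def
  proof (intro conjI ballI)
    show "inj_on f (verts G)"
      using eq_iff by (auto simp: inj_on_def)
    show "f ` verts G \<subseteq> verts (clique_grid n k)"
      using f_verts by blast
    fix x y assume "x \<in> verts G" "y \<in> verts G"
    then show "(x, y) \<in> edges G \<longleftrightarrow> (f x, f y) \<in> edges (clique_grid n k)"
      using edge_iff_closed_nbhd_eq[OF G_simple \<open>union_of_cliques G\<close>] eq_iff adj_iff f_verts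
      by (auto simp: edges_clique_grid)
  qed
  then show ?thesis by blast
qed

lemma div_eq_iff_mem_interval:
  fixes a i j :: nat
  assumes "0 < i"
  shows "a div i = j \<longleftrightarrow> a \<in> {i * j..<i * j + i}"
proof -
  have "a div i = j \<longleftrightarrow> j \<le> a div i \<and> a div i < Suc j"
    by linarith
  also have "\<dots> \<longleftrightarrow> j * i \<le> a \<and> a < Suc j * i"
    using assms by (simp only: less_eq_div_iff_mult_less_eq div_less_iff_less_mult)
  finally show ?thesis
    by (simp add: algebra_simps)
qed

definition clique_union :: "nat \<Rightarrow> nat \<Rightarrow> nat graph" where
  "clique_union i m = ({..<i * m}, {(x, y). x < i * m \<and> y < i * m \<and> x \<noteq> y \<and> x div i = y div i})"

lemma verts_clique_union: "verts (clique_union i m) = {..<i * m}"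
  by (simp add: clique_union_def verts_def)

lemma edges_clique_union:
  "edges (clique_union i m) = {(x, y). x < i * m \<and> y < i * m \<and> x \<noteq> y \<and> x div i = y div i}"
  by (simp add: clique_union_def edges_def)

lemma interval_subset_verts_clique_union:
  "j < m \<Longrightarrow> {i * j..<i * j + i} \<subseteq> verts (clique_union i m)"
  using mult_le_mono2[of "Suc j" m i] by (auto simp: verts_clique_union)

lemma closed_nbhd_clique_union:
  assumes "0 < i" "x \<in> verts (clique_union i m)"
  shows "closed_nbhd (clique_union i m) x = {i * (x div i)..<i * (x div i) + i}"
proof -
  have "x div i < m"
    using assms by (simp add: verts_clique_union div_less_iff_less_mult mult.commute)
  then have block: "{i * (x div i)..<i * (x div i) + i} \<subseteq> verts (clique_union i m)"
    by (rule interval_subset_verts_clique_union)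
  have "closed_nbhd (clique_union i m) x = {a \<in> verts (clique_union i m). a div i = x div i}"
    using assms(2) by (auto simp: closed_nbhd_def edges_clique_union verts_clique_union)
  also have "\<dots> = {i * (x div i)..<i * (x div i) + i}"
    using block div_eq_iff_mem_interval[OF assms(1)] by blast
  finally show ?thesis .
qed

lemma clique_union_in_K_family:
  assumes "1 \<le> i" "i \<le> k"
  shows "clique_union i (n div i) \<in> K_family n k"
proof -
  let ?G = "clique_union i (n div i)"
  have "simple_graph ?G"
    by (auto simp: simple_graph_def verts_clique_union edges_clique_union sym_def)
  moreover have "card (verts ?G) \<le> n"
    by (simp add: verts_clique_union mult.commute)
  moreover have "union_of_cliques ?G"
    by (auto simp: union_of_cliques_def edges_clique_union)
  ultimately show ?thesis
    using assms closed_nbhd_clique_union[of i] by (simp add: K_family_def)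
qed

lemma clique_union_embedding_blocks:
  assumes f: "induced_embedding f (clique_union i m) U" and "0 < i" "j < m" "j' < m"
    and x: "x \<in> f ` {i * j..<i * j + i}" and y: "y \<in> f ` {i * j'..<i * j' + i}"
  shows "x = y \<or> (x, y) \<in> edges U \<longleftrightarrow> j = j'"
proof -
  obtain a b where a: "a \<in> {i * j..<i * j + i}" "x = f a" and b: "b \<in> {i * j'..<i * j' + i}" "y = f b"
    using x y by blast
  have verts: "a \<in> verts (clique_union i m)" "b \<in> verts (clique_union i m)"
    using a(1) b(1) interval_subset_verts_clique_union assms(3,4) by blast+
  have "a div i = j" "b div i = j'"
    using a(1) b(1) div_eq_iff_mem_interval[OF \<open>0 < i\<close>] by simp_all
  moreover have "x = y \<longleftrightarrow> a = b" and "(x, y) \<in> edges U \<longleftrightarrow> (a, b) \<in> edges (clique_union i m)"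
    using f verts a(2) b(2) by (auto simp: induced_embedding_def inj_on_def)
  ultimately show ?thesis
    using verts by (auto simp: edges_clique_union verts_clique_union)
qed

lemma K_family_universal_card_ge:
  assumes U: "induced_universal U (K_family n k)"
  shows "(\<Sum>i = 1..k. n div i) \<le> card (verts U)"
proof -
  have "\<forall>i \<in> {1..k}. \<exists>f. induced_embedding f (clique_union i (n div i)) U"
    using U clique_union_in_K_family by (auto simp: induced_universal_def)
  then obtain F where F: "\<And>i. i \<in> {1..k} \<Longrightarrow> induced_embedding (F i) (clique_union i (n div i)) U"
    by metis
  define P where "P = Sigma {1..k} (\<lambda>i. {..<n div i})"
  define S where "S = (\<lambda>(i, j). F i ` {i * j..<i * j + i})"
  have S_sub: "S p \<subseteq> verts U" and card_S: "card (S p) = fst p" if "p \<in> P" for p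
  proof -
    obtain i j where p: "p = (i, j)" "i \<in> {1..k}" "j < n div i"
      using \<open>p \<in> P\<close> by (auto simp: P_def)
    have "inj_on (F i) (verts (clique_union i (n div i)))" "F i ` verts (clique_union i (n div i)) \<subseteq> verts U"
      using F[OF p(2)] by (simp_all add: induced_embedding_def)
    with interval_subset_verts_clique_union[OF p(3), of i]
    have "inj_on (F i) {i * j..<i * j + i}" "F i ` {i * j..<i * j + i} \<subseteq> verts U"
      by (auto intro: inj_on_subset)
    then show "S p \<subseteq> verts U" "card (S p) = fst p"
      by (simp_all add: S_def p(1) card_image)
  qed
  have joined: "j = j'"
    if "(i0, j0) \<in> P" "(i, j) \<in> P" "(i, j') \<in> P"
      and "x \<in> S (i0, j0) \<inter> S (i, j)" "y \<in> S (i0, j0) \<inter> S (i, j')" for i0 j0 i j j' x y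
  proof -
    have i0: "i0 \<in> {1..k}" "j0 < n div i0" and i: "i \<in> {1..k}" "j < n div i" "j' < n div i"
      using that(1-3) by (auto simp: P_def)
    have "x \<in> F i0 ` {i0 * j0..<i0 * j0 + i0}" "y \<in> F i0 ` {i0 * j0..<i0 * j0 + i0}"
      and "x \<in> F i ` {i * j..<i * j + i}" "y \<in> F i ` {i * j'..<i * j' + i}"
      using that(4,5) by (auto simp: S_def)
    then have "x = y \<or> (x, y) \<in> edges U"
      using clique_union_embedding_blocks[OF F[OF i0(1)] _ i0(2) i0(2)] i0(1) by auto
    then show "j = j'"
      using clique_union_embedding_blocks[OF F[OF i(1)] _ i(2) i(3)] i(1)
        \<open>x \<in> F i ` _\<close> \<open>y \<in> F i ` _\<close> by auto
  qed
  have "card P \<le> card (\<Union> (S ` P))"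
  proof (rule card_le_card_UN_if_inj_on_card_meeting)
    show "finite P"
      by (simp add: P_def)
    fix p assume "p \<in> P"
    then show "finite (S p) \<and> S p \<noteq> {}"
      using card_S[of p] by (auto simp: P_def intro: card_ge_0_finite)
    show "inj_on (card \<circ> S) {q \<in> P. S p \<inter> S q \<noteq> {}}"
    proof (rule inj_onI)
      fix q q' assume "q \<in> {q \<in> P. S p \<inter> S q \<noteq> {}}" "q' \<in> {q \<in> P. S p \<inter> S q \<noteq> {}}"
        and "(card \<circ> S) q = (card \<circ> S) q'"
      moreover obtain i0 j0 i j i' j' where "p = (i0, j0)" "q = (i, j)" "q' = (i', j')"
        by (metis surj_pair)
      ultimately show "q = q'"
        using \<open>p \<in> P\<close> card_S joined[of i0 j0 i j j'] by auto
    qed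
  qed
  also have "\<dots> \<le> card (verts U)"
    using S_sub U by (intro card_mono) (auto simp: induced_universal_def simple_graph_def)
  finally show ?thesis
    by (simp add: P_def)
qed

theorem theorem1:
  fixes n k :: nat
  assumes "n \<ge> 1" and "k \<ge> 1"
  shows "univ_number (K_family n k) = (\<Sum>i = 1..k. n div i)
     \<and> real (\<Sum>i = 1..k. n div i) \<ge> (real n + 1) * ln (real k + 1) - real k"
proof
  have "induced_universal (clique_grid n k) (K_family n k)"
    using simple_graph_clique_grid clique_grid_embedding by (simp add: induced_universal_def)
  then show "univ_number (K_family n k) = (\<Sum>i = 1..k. n div i)"
    using card_verts_clique_grid K_family_universal_card_ge by (rule univ_number_eqI)
  show "real (\<Sum>i = 1..k. n div i) \<ge> (real n + 1) * ln (real k + 1) - real k"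
    by (rule sum_div_ge_ln)
qed

end
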